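(* Let $\mathcal{M}\subset\mathbb{R}^K$ be a submanifold with geodesic distance $d_{\mathcal{M}}$ and $\mu$ a Borel probability measure on $\mathcal{M}$. Let $p_2\in(0,0.5]$ and let $\mathcal{V}=\{X_1,\dots,X_n\}$ be an i.i.d. sample of size $n$ from $\mu$. Set $\delta^2=4n^{-1}\ln\big(\frac{4n^2}{p_2}\big)$. Then with probability at least $1-p_2$, for all $X_i\in\mathcal{V}$ and all $r>0$, $$\eta_1(B_{\mathcal{M}}(X_i,r))\le\tfrac32\mu(B_{\mathcal{M}}(X_i,r))+3\delta^2\quad\text{and}\quad\mu(B_{\mathcal{M}}(X_i,r))\le\tfrac32\eta_1(B_{\mathcal{M}}(X_i,r))+3\delta^2.$$
   Context: $B_{\mathcal{M}}(x,r)=\{y\in\mathcal{M}:d_{\mathcal{M}}(x,y)<r\}$; $\eta_1(W)=\frac1n\sum_{j=1}^n\mathbf{1}_{X_j\in W}$ is the empirical measure of the sample. *)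

theory Defs
  imports "HOL-Analysis.Analysis" "HOL-Probability.Probability"
begin

definition C1_on :: "'a::euclidean_space set \<Rightarrow> ('a \<Rightarrow> 'a) \<Rightarrow> bool" where
  "C1_on U f \<longleftrightarrow> (\<exists>D. (\<forall>y\<in>U. (f has_derivative blinfun_apply (D y)) (at y))
                       \<and> continuous_on U D)"

definition is_submanifold :: "'a::euclidean_space set \<Rightarrow> bool" where
  "is_submanifold M \<longleftrightarrow>
     (\<forall>x\<in>M. \<exists>U V \<phi> \<psi> L. open U \<and> x \<in> U \<and> open V \<and> subspace L \<and>
         \<phi> ` U = V \<and> (\<forall>y\<in>U. \<psi> (\<phi> y) = y) \<and> (\<forall>z\<in>V. \<phi> (\<psi> z) = z) \<and>
         C1_on U \<phi> \<and> C1_on V \<psi> \<and> \<phi> ` (M \<inter> U) = V \<inter> L)"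

definition curve_length :: "(real \<Rightarrow> 'a::real_normed_vector) \<Rightarrow> ereal" where
  "curve_length \<gamma> = (SUP (t, m) \<in> {(t :: nat \<Rightarrow> real, m :: nat).
        t 0 = 0 \<and> t m = 1 \<and> (\<forall>k<m. t k \<le> t (Suc k))}.
        ereal (\<Sum>k<m. norm (\<gamma> (t (Suc k)) - \<gamma> (t k))))"

text \<open>Geodesic (intrinsic) distance on M: infimum of lengths of curves in M
  joining x and y (\<infinity> if there are none).\<close>
definition geodesic_dist :: "'a::real_normed_vector set \<Rightarrow> 'a \<Rightarrow> 'a \<Rightarrow> ereal" where
  "geodesic_dist M x y = (INF \<gamma> \<in> {\<gamma>. path \<gamma> \<and> path_image \<gamma> \<subseteq> M \<and>
        pathstart \<gamma> = x \<and> pathfinish \<gamma> = y}. curve_length \<gamma>)"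

definition geo_ball :: "'a::real_normed_vector set \<Rightarrow> 'a \<Rightarrow> real \<Rightarrow> 'a set" where
  "geo_ball M x r = {y \<in> M. geodesic_dist M x y < ereal r}"

definition empirical :: "nat \<Rightarrow> (nat \<Rightarrow> 'a) \<Rightarrow> 'a set \<Rightarrow> real" where
  "empirical n x W = real (card {j \<in> {..<n}. x j \<in> W}) / real n"

end

theory Submission
  imports Defs
begin

text \<open>Only the measurability of the geodesic distance uses the manifold structure: near each
  point, \<open>M\<close> is the Lipschitz image of a convex piece of a linear subspace, so nearby points of
  \<open>M\<close> are joined by short curves in \<open>M\<close>; with the triangle inequality this makes the geodesic
  distance upper semicontinuous on \<open>M \<times> M\<close>, hence Borel.

  The rest works for any measurable extended-real valued \<open>D\<close>. Conditioned on \<open>X i\<close> and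
  \<open>X j\<close>, the other \<open>n - 2\<close> sample points are i.i.d., so an exponential Markov bound with base 2
  shows that the ball of radius \<open>D (X i) (X j)\<close> around \<open>X i\<close> (closed for the upper, open for
  the lower inequality) violates the claimed inequality with probability at most
  \<open>exp (- L) = p2 / (4 n\<^sup>2)\<close>, where \<open>L = ln (4 n\<^sup>2 / p2)\<close>. A union bound over the \<open>2 n\<^sup>2\<close> such events leaves probability
  \<open>1 - p2 / 2\<close>, and outside of them the inequalities hold at every radius, because the empirical
  mass of a ball around \<open>X i\<close> only changes at the radii \<open>D (X i) (X j)\<close>.\<close>

section \<open>Measurability of the geodesic distance\<close>

lemma partition_mono:
  fixes t :: "nat \<Rightarrow> real"
  assumes "\<forall>k<m. t k \<le> t (Suc k)" "i \<le> j" "j \<le> m"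
  shows "t i \<le> t j"
  using assms(2,3) by (induction j rule: dec_induct) (use assms(1) in \<open>auto intro: order_trans\<close>)

lemma partition_crossing:
  fixes t :: "nat \<Rightarrow> real"
  assumes t0: "t 0 \<le> c" and tm: "c < t m" and mono: "\<forall>k<m. t k \<le> t (Suc k)"
  obtains p where "Suc p \<le> m" "\<And>k. k \<le> p \<Longrightarrow> t k \<le> c" "\<And>k. Suc p \<le> k \<Longrightarrow> k \<le> m \<Longrightarrow> c < t k"
proof -
  define p where "p = (LEAST k. c < t k) - 1"
  have least: "c < t (LEAST k. c < t k)" "(LEAST k. c < t k) \<le> m"
    using LeastI[of "\<lambda>k. c < t k" m] Least_le[of "\<lambda>k. c < t k" m] tm by auto
  moreover have "(LEAST k. c < t k) \<noteq> 0" using least(1) t0 by (intro notI) simp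
  ultimately have "Suc p = (LEAST k. c < t k)" by (simp add: p_def)
  then have pm: "Suc p \<le> m" and tp1: "c < t (Suc p)" and tp: "t p \<le> c"
    using least not_less_Least[of p "\<lambda>k. c < t k"] by auto
  show thesis
  proof (rule that[OF pm])
    show "t k \<le> c" if "k \<le> p" for k using partition_mono[OF mono that] pm tp by simp
    show "c < t k" if "Suc p \<le> k" "k \<le> m" for k using partition_mono[OF mono that] tp1 by simp
  qed
qed

lemma polygon_le_curve_length:
  assumes "t 0 = 0" "t m = 1" "\<forall>k<m. t k \<le> t (Suc k)"
  shows "ereal (\<Sum>k<m. norm (\<gamma> (t (Suc k)) - \<gamma> (t k))) \<le> curve_length \<gamma>"
  unfolding curve_length_def by (rule SUP_upper2[of "(t, m)"]) (use assms in auto)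

lemma curve_length_leI:
  assumes "\<And>t m. t 0 = 0 \<Longrightarrow> t m = 1 \<Longrightarrow> \<forall>k<m. t k \<le> t (Suc k) \<Longrightarrow>
             (\<Sum>k<m. norm (\<gamma> (t (Suc k)) - \<gamma> (t k))) \<le> C"
  shows "curve_length \<gamma> \<le> ereal C"
  unfolding curve_length_def by (rule SUP_least) (auto intro: assms)

lemma curve_length_nonneg: "0 \<le> curve_length \<gamma>"
  by (rule order_trans[OF _ polygon_le_curve_length[of "\<lambda>k. if k = 0 then 0 else 1" 1]]) auto

lemma chain_le_curve_length:
  fixes t :: "nat \<Rightarrow> real"
  assumes t0: "0 \<le> t 0" and tm: "t m \<le> 1" and mono: "\<forall>k<m. t k \<le> t (Suc k)"
  shows "ereal (norm (\<gamma> (t 0) - \<gamma> 0) + (\<Sum>k<m. norm (\<gamma> (t (Suc k)) - \<gamma> (t k)))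
                + norm (\<gamma> 1 - \<gamma> (t m))) \<le> curve_length \<gamma>"
proof -
  define t' where "t' k = (if k = 0 then 0 else if k \<le> Suc m then t (k - 1) else 1)" for k
  have "t' k \<le> t' (Suc k)" if "k < Suc (Suc m)" for k
    using that t0 tm mono[rule_format, of "k - 1"] by (cases k) (auto simp: t'_def not_le less_Suc_eq)
  then have "ereal (\<Sum>k<Suc (Suc m). norm (\<gamma> (t' (Suc k)) - \<gamma> (t' k))) \<le> curve_length \<gamma>"
    by (intro polygon_le_curve_length) (auto simp: t'_def)
  also have "(\<Sum>k<Suc (Suc m). norm (\<gamma> (t' (Suc k)) - \<gamma> (t' k)))
      = norm (\<gamma> (t' 1) - \<gamma> (t' 0)) + (\<Sum>k<m. norm (\<gamma> (t' (Suc (Suc k))) - \<gamma> (t' (Suc k))))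
        + norm (\<gamma> (t' (Suc (Suc m))) - \<gamma> (t' (Suc m)))"
    by (subst sum.lessThan_Suc, subst sum.lessThan_Suc_shift) simp
  also have "(\<Sum>k<m. norm (\<gamma> (t' (Suc (Suc k))) - \<gamma> (t' (Suc k))))
      = (\<Sum>k<m. norm (\<gamma> (t (Suc k)) - \<gamma> (t k)))"
    by (intro sum.cong) (auto simp: t'_def)
  finally show ?thesis by (simp add: t'_def)
qed

lemma curve_length_joinpaths_le:
  assumes "pathfinish \<gamma>1 = pathstart \<gamma>2"
  shows "curve_length (\<gamma>1 +++ \<gamma>2) \<le> curve_length \<gamma>1 + curve_length \<gamma>2"
  unfolding curve_length_def[of "\<gamma>1 +++ \<gamma>2"]
proof (rule SUP_least, clarify)
  fix t :: "nat \<Rightarrow> real" and m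
  assume t0: "t 0 = 0" and tm: "t m = 1" and mono: "\<forall>k<m. t k \<le> t (Suc k)"
  define f where "f k = norm ((\<gamma>1 +++ \<gamma>2) (t (Suc k)) - (\<gamma>1 +++ \<gamma>2) (t k))" for k
  obtain p where pm: "Suc p \<le> m" and low: "\<And>k. k \<le> p \<Longrightarrow> t k \<le> 1/2"
    and high: "\<And>k. Suc p \<le> k \<Longrightarrow> k \<le> m \<Longrightarrow> 1/2 < t k"
    using partition_crossing[of t "1/2" m] t0 tm mono by auto
  define q where "q = m - Suc p"
  define s where "s k = 2 * t k" for k
  define u where "u l = 2 * t (Suc p + l) - 1" for l
  have first: "ereal (norm (\<gamma>1 (s 0) - \<gamma>1 0) + (\<Sum>k<p. norm (\<gamma>1 (s (Suc k)) - \<gamma>1 (s k)))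
      + norm (\<gamma>1 1 - \<gamma>1 (s p))) \<le> curve_length \<gamma>1"
    by (rule chain_le_curve_length) (use t0 low[of p] mono pm in \<open>auto simp: s_def\<close>)
  have second: "ereal (norm (\<gamma>2 (u 0) - \<gamma>2 0) + (\<Sum>l<q. norm (\<gamma>2 (u (Suc l)) - \<gamma>2 (u l)))
      + norm (\<gamma>2 1 - \<gamma>2 (u q))) \<le> curve_length \<gamma>2"
    by (rule chain_le_curve_length) (use high[of "Suc p"] tm mono pm in \<open>auto simp: u_def q_def\<close>)
  have "(\<Sum>k<p. f k) = (\<Sum>k<p. norm (\<gamma>1 (s (Suc k)) - \<gamma>1 (s k)))"
    using low by (intro sum.cong) (auto simp: f_def s_def joinpaths_def)
  moreover have "(\<Sum>l<q. f (Suc p + l)) = (\<Sum>l<q. norm (\<gamma>2 (u (Suc l)) - \<gamma>2 (u l)))"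
  proof (intro sum.cong refl)
    fix l assume "l \<in> {..<q}"
    then have "1/2 < t (Suc p + l)" "1/2 < t (Suc (Suc p + l))" using high by (auto simp: q_def)
    then show "f (Suc p + l) = norm (\<gamma>2 (u (Suc l)) - \<gamma>2 (u l))"
      by (simp add: f_def u_def joinpaths_def)
  qed
  moreover have "f p \<le> norm (\<gamma>1 1 - \<gamma>1 (s p)) + norm (\<gamma>2 (u 0) - \<gamma>2 0)"
    using assms low[of p] high[of "Suc p"] pm norm_triangle_ineq[of "\<gamma>1 1 - \<gamma>1 (s p)" "\<gamma>2 (u 0) - \<gamma>2 0"]
    by (simp add: f_def s_def u_def joinpaths_def pathfinish_def pathstart_def)
  moreover have "(\<Sum>k<m. f k) = (\<Sum>k<p. f k) + f p + (\<Sum>l<q. f (Suc p + l))"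
  proof -
    have split: "(\<Sum>k<Suc p + l. f k) = (\<Sum>k<Suc p. f k) + (\<Sum>i<l. f (Suc p + i))" for l
      by (induction l) simp_all
    have "Suc p + q = m" using pm by (simp add: q_def)
    then show ?thesis using split[of q] by simp
  qed
  moreover have "s 0 = 0" "u q = 1" using t0 tm pm by (simp_all add: s_def u_def q_def)
  ultimately have "ereal (\<Sum>k<m. f k)
      \<le> ereal (norm (\<gamma>1 (s 0) - \<gamma>1 0) + (\<Sum>k<p. norm (\<gamma>1 (s (Suc k)) - \<gamma>1 (s k)))
          + norm (\<gamma>1 1 - \<gamma>1 (s p)))
        + ereal (norm (\<gamma>2 (u 0) - \<gamma>2 0) + (\<Sum>l<q. norm (\<gamma>2 (u (Suc l)) - \<gamma>2 (u l)))
          + norm (\<gamma>2 1 - \<gamma>2 (u q)))"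
    by simp
  also have "\<dots> \<le> curve_length \<gamma>1 + curve_length \<gamma>2" using first second by (rule add_mono)
  finally show "ereal (\<Sum>k<m. norm ((\<gamma>1 +++ \<gamma>2) (t (Suc k)) - (\<gamma>1 +++ \<gamma>2) (t k)))
      \<le> curve_length \<gamma>1 + curve_length \<gamma>2"
    by (simp add: f_def)
qed

lemma curve_length_lipschitz_linepath_le:
  fixes \<psi> :: "'a::real_normed_vector \<Rightarrow> 'b::real_normed_vector"
  assumes lip: "B-lipschitz_on (closed_segment a b) \<psi>"
  shows "curve_length (\<psi> \<circ> linepath a b) \<le> ereal (B * dist a b)"
proof (rule curve_length_leI)
  fix t :: "nat \<Rightarrow> real" and m
  assume t0: "t 0 = 0" and tm: "t m = 1" and mono: "\<forall>k<m. t k \<le> t (Suc k)"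
  have on_segment: "linepath a b (t k) \<in> closed_segment a b" if "k \<le> m" for k
    using partition_mono[OF mono, of 0 k] partition_mono[OF mono, of k m] that t0 tm
    by (intro linepath_in_path) auto
  have "norm (\<psi> (linepath a b (t (Suc k))) - \<psi> (linepath a b (t k))) \<le> B * dist a b * (t (Suc k) - t k)"
    if k: "k < m" for k
  proof -
    have "linepath a b (t (Suc k)) - linepath a b (t k) = (t (Suc k) - t k) *\<^sub>R (b - a)"
      by (simp add: linepath_def algebra_simps)
    then have "dist (linepath a b (t (Suc k))) (linepath a b (t k)) = dist a b * (t (Suc k) - t k)"
      using mono k by (simp add: dist_norm norm_minus_commute)
    then show ?thesis
      using lipschitz_onD[OF lip on_segment on_segment, of "Suc k" k] k by (simp add: dist_norm mult.assoc)
  qed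
  then have "(\<Sum>k<m. norm (\<psi> (linepath a b (t (Suc k))) - \<psi> (linepath a b (t k))))
      \<le> (\<Sum>k<m. B * dist a b * (t (Suc k) - t k))"
    by (intro sum_mono) simp
  also have "\<dots> = B * dist a b * (\<Sum>k<m. t (Suc k) - t k)" by (simp add: sum_distrib_left)
  also have "(\<Sum>k<m. t (Suc k) - t k) = 1" using sum_lessThan_telescope[of t m] t0 tm by simp
  finally show "(\<Sum>k<m. norm ((\<psi> \<circ> linepath a b) (t (Suc k)) - (\<psi> \<circ> linepath a b) (t k))) \<le> B * dist a b"
    by simp
qed

lemma geodesic_dist_le_curve_length:
  assumes "path \<gamma>" "path_image \<gamma> \<subseteq> M" "pathstart \<gamma> = x" "pathfinish \<gamma> = y"
  shows "geodesic_dist M x y \<le> curve_length \<gamma>"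
  unfolding geodesic_dist_def by (rule INF_lower) (use assms in auto)

lemma geodesic_dist_lipschitz_image_le:
  fixes \<psi> :: "'a::real_normed_vector \<Rightarrow> 'b::real_normed_vector"
  assumes S: "convex S" and lip: "B-lipschitz_on S \<psi>" and im: "\<psi> ` S \<subseteq> M"
    and a: "a \<in> S" and b: "b \<in> S"
  shows "geodesic_dist M (\<psi> a) (\<psi> b) \<le> ereal (B * dist a b)"
proof -
  have seg: "closed_segment a b \<subseteq> S" using closed_segment_subset[OF a b S] .
  then have "continuous_on (path_image (linepath a b)) \<psi>"
    using lipschitz_on_continuous_on[OF lip] by (auto intro: continuous_on_subset)
  then have "path (\<psi> \<circ> linepath a b)" by (intro path_continuous_image) auto
  moreover have "path_image (\<psi> \<circ> linepath a b) \<subseteq> M"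
    using seg im by (auto simp: path_image_compose)
  ultimately have "geodesic_dist M (\<psi> a) (\<psi> b) \<le> curve_length (\<psi> \<circ> linepath a b)"
    by (intro geodesic_dist_le_curve_length) (auto simp: pathstart_compose pathfinish_compose)
  also have "\<dots> \<le> ereal (B * dist a b)"
    using lipschitz_on_subset[OF lip seg] by (rule curve_length_lipschitz_linepath_le)
  finally show ?thesis .
qed

lemma geodesic_dist_triangle_less:
  assumes "geodesic_dist M x y < ereal a" "geodesic_dist M y z < ereal b"
  shows "geodesic_dist M x z < ereal (a + b)"
proof -
  obtain \<gamma>1 where \<gamma>1: "path \<gamma>1" "path_image \<gamma>1 \<subseteq> M" "pathstart \<gamma>1 = x" "pathfinish \<gamma>1 = y"
    "curve_length \<gamma>1 < ereal a"
    using assms(1) unfolding geodesic_dist_def INF_less_iff by auto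
  obtain \<gamma>2 where \<gamma>2: "path \<gamma>2" "path_image \<gamma>2 \<subseteq> M" "pathstart \<gamma>2 = y" "pathfinish \<gamma>2 = z"
    "curve_length \<gamma>2 < ereal b"
    using assms(2) unfolding geodesic_dist_def INF_less_iff by auto
  have "geodesic_dist M x z \<le> curve_length (\<gamma>1 +++ \<gamma>2)"
    using \<gamma>1 \<gamma>2 by (intro geodesic_dist_le_curve_length) (auto simp: path_image_join)
  also have "\<dots> \<le> curve_length \<gamma>1 + curve_length \<gamma>2"
    using \<gamma>1 \<gamma>2 by (intro curve_length_joinpaths_le) simp
  also have "\<dots> < ereal a + ereal b"
    using \<gamma>1(5) \<gamma>2(5) curve_length_nonneg[of \<gamma>1] curve_length_nonneg[of \<gamma>2]
    by (intro ereal_add_strict_mono) auto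
  finally show ?thesis by simp
qed

lemma C1_on_lipschitz_near:
  fixes \<psi> :: "'a::euclidean_space \<Rightarrow> 'a"
  assumes "C1_on V \<psi>" and "open V" and "c \<in> V"
  obtains R B where "0 < R" "ball c R \<subseteq> V" "0 < B" "B-lipschitz_on (ball c R) \<psi>"
proof -
  obtain D where D: "\<forall>z\<in>V. (\<psi> has_derivative blinfun_apply (D z)) (at z)" and "continuous_on V D"
    using assms(1) unfolding C1_on_def by blast
  then have "isCont D c" using assms(2,3) continuous_on_eq_continuous_at by blast
  then obtain R1 where R1: "0 < R1" "\<forall>z. dist z c < R1 \<longrightarrow> dist (D z) (D c) < 1"
    unfolding continuous_at_eps_delta using zero_less_one by blast
  obtain R2 where R2: "0 < R2" "ball c R2 \<subseteq> V" using assms(2,3) open_contains_ball by blast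
  define R where "R = min R1 R2"
  define B where "B = norm (D c) + 1"
  have "norm (\<psi> a - \<psi> b) \<le> B * norm (a - b)" if "a \<in> ball c R" "b \<in> ball c R" for a b
  proof (rule differentiable_bound[of "ball c R" \<psi> "\<lambda>z. blinfun_apply (D z)"])
    fix z assume z: "z \<in> ball c R"
    then have "z \<in> V" using R2(2) by (auto simp: R_def)
    then show "(\<psi> has_derivative blinfun_apply (D z)) (at z within ball c R)"
      using D by (auto intro: has_derivative_at_withinI)
    have "dist (D z) (D c) < 1" using R1 z by (auto simp: R_def dist_commute)
    then show "onorm (blinfun_apply (D z)) \<le> B"
      using norm_triangle_ineq2[of "D z" "D c"] by (simp add: B_def dist_norm norm_blinfun.rep_eq[symmetric])
  qed (use that in auto)
  then have "B-lipschitz_on (ball c R) \<psi>" by (intro lipschitz_onI) (auto simp: B_def dist_norm)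
  moreover have "0 < R" "ball c R \<subseteq> V" "0 < B" using R1 R2 by (auto simp: R_def B_def add_nonneg_pos)
  ultimately show thesis using that by blast
qed

text \<open>Here \<open>\<phi>\<close> is a chart of \<open>M\<close> at \<open>x\<close> and \<open>\<psi>\<close> its inverse, restricted to a small convex
  piece of the flattened image of \<open>M\<close>.\<close>
lemma submanifold_local_lipschitz_parametrization:
  fixes M :: "'a::euclidean_space set"
  assumes "is_submanifold M" and "x \<in> M"
  obtains S :: "'a set" and B :: real and \<psi> \<phi> :: "'a \<Rightarrow> 'a" and d :: real
  where "convex S" "0 < B" "B-lipschitz_on S \<psi>" "\<psi> ` S \<subseteq> M" "isCont \<phi> x"
    "0 < d" "\<And>x'. x' \<in> M \<Longrightarrow> dist x' x < d \<Longrightarrow> \<phi> x' \<in> S \<and> \<psi> (\<phi> x') = x'"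
proof -
  obtain U V \<phi> \<psi> L where U: "open U" "x \<in> U" and V: "open V" and L: "subspace L"
    and inv: "\<forall>y\<in>U. \<psi> (\<phi> y) = y" and C1\<phi>: "C1_on U \<phi>" and C1\<psi>: "C1_on V \<psi>"
    and chart: "\<phi> ` (M \<inter> U) = V \<inter> L"
    using assms unfolding is_submanifold_def by metis
  obtain D\<phi> where "\<forall>y\<in>U. (\<phi> has_derivative blinfun_apply (D\<phi> y)) (at y)"
    using C1\<phi> unfolding C1_on_def by blast
  then have cont\<phi>: "isCont \<phi> x" using U has_derivative_continuous by blast
  have c: "\<phi> x \<in> V \<inter> L" using chart assms(2) U by blast
  then obtain R B where R: "0 < R" "ball (\<phi> x) R \<subseteq> V" and B: "0 < B"
    and lip: "B-lipschitz_on (ball (\<phi> x) R) \<psi>"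
    using C1_on_lipschitz_near[OF C1\<psi> V] by blast
  have im: "\<psi> ` (ball (\<phi> x) R \<inter> L) \<subseteq> M"
  proof
    fix y assume "y \<in> \<psi> ` (ball (\<phi> x) R \<inter> L)"
    then obtain z where "z \<in> V \<inter> L" "y = \<psi> z" using R by auto
    then show "y \<in> M" using chart inv by force
  qed
  obtain d1 where d1: "0 < d1" "\<forall>x'. dist x' x < d1 \<longrightarrow> dist (\<phi> x') (\<phi> x) < R"
    using cont\<phi> R(1) unfolding continuous_at_eps_delta by blast
  obtain d2 where d2: "0 < d2" "ball x d2 \<subseteq> U" using U open_contains_ball by blast
  have param: "\<phi> x' \<in> ball (\<phi> x) R \<inter> L \<and> \<psi> (\<phi> x') = x'" if "x' \<in> M" "dist x' x < min d1 d2" for x'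
  proof -
    have "x' \<in> U" using that d2 by (auto simp: dist_commute)
    then show ?thesis using that d1 chart inv by (auto simp: dist_commute)
  qed
  have "convex (ball (\<phi> x) R \<inter> L)" using L by (simp add: convex_Int subspace_imp_convex)
  moreover have "B-lipschitz_on (ball (\<phi> x) R \<inter> L) \<psi>" using lip by (rule lipschitz_on_subset) auto
  moreover have "0 < min d1 d2" using d1 d2 by simp
  ultimately show thesis
    using B im cont\<phi> param by (intro that[of "ball (\<phi> x) R \<inter> L" B \<psi> \<phi> "min d1 d2"]) auto
qed

lemma geodesic_dist_locally_small:
  fixes M :: "'a::euclidean_space set"
  assumes "is_submanifold M" and "x \<in> M" and "0 < e"
  obtains d where "0 < d"
    "\<And>x'. x' \<in> M \<Longrightarrow> dist x' x < d \<Longrightarrow> geodesic_dist M x x' < ereal e \<and> geodesic_dist M x' x < ereal e"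
proof -
  obtain S B and \<psi> \<phi> :: "'a \<Rightarrow> 'a" and d where S: "convex S" and B: "0 < B" and lip: "B-lipschitz_on S \<psi>"
    and im: "\<psi> ` S \<subseteq> M" and cont: "isCont \<phi> x" and d: "0 < d"
    and param: "\<And>x'. x' \<in> M \<Longrightarrow> dist x' x < d \<Longrightarrow> \<phi> x' \<in> S \<and> \<psi> (\<phi> x') = x'"
    by (rule submanifold_local_lipschitz_parametrization[OF assms(1,2)]) blast
  have "0 < e / B" using B assms(3) by simp
  then obtain d' where d': "0 < d'" "\<forall>x'. dist x' x < d' \<longrightarrow> dist (\<phi> x') (\<phi> x) < e / B"
    using cont unfolding continuous_at_eps_delta by blast
  show thesis
  proof (rule that[of "min d d'"])
    fix x' assume near: "x' \<in> M" "dist x' x < min d d'"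
    have x: "\<phi> x \<in> S" "\<psi> (\<phi> x) = x" using param[OF assms(2)] d by auto
    have x': "\<phi> x' \<in> S" "\<psi> (\<phi> x') = x'" using param near by auto
    have small: "B * dist (\<phi> x') (\<phi> x) < e" using d' near B by (simp add: field_simps)
    have "geodesic_dist M x x' \<le> ereal (B * dist (\<phi> x) (\<phi> x'))"
      using geodesic_dist_lipschitz_image_le[OF S lip im x(1) x'(1)] x x' by simp
    moreover have "geodesic_dist M x' x \<le> ereal (B * dist (\<phi> x') (\<phi> x))"
      using geodesic_dist_lipschitz_image_le[OF S lip im x'(1) x(1)] x x' by simp
    ultimately show "geodesic_dist M x x' < ereal e \<and> geodesic_dist M x' x < ereal e"
      using small by (simp add: dist_commute le_less_trans)
  qed (simp add: d d')
qed

lemma openin_geodesic_dist_less: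
  fixes M :: "'a::euclidean_space set"
  assumes "is_submanifold M"
  shows "openin (top_of_set (M \<times> M)) {p \<in> M \<times> M. geodesic_dist M (fst p) (snd p) < r}"
  unfolding openin_euclidean_subtopology_iff
proof (intro conjI ballI)
  fix p assume "p \<in> {p \<in> M \<times> M. geodesic_dist M (fst p) (snd p) < r}"
  then obtain x y where p: "p = (x, y)" "x \<in> M" "y \<in> M" "geodesic_dist M x y < r" by auto
  obtain a where a: "geodesic_dist M x y < ereal a" "ereal a < r" using ereal_dense2[OF p(4)] by blast
  obtain b where b: "a < b" "ereal b < r" using ereal_dense2[OF a(2)] by auto
  define e where "e = (b - a) / 2"
  have e: "0 < e" using b by (simp add: e_def)
  obtain d1 where d1: "0 < d1" "\<And>x'. x' \<in> M \<Longrightarrow> dist x' x < d1 \<Longrightarrow> geodesic_dist M x' x < ereal e"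
    using geodesic_dist_locally_small[OF assms p(2) e] by metis
  obtain d2 where d2: "0 < d2" "\<And>y'. y' \<in> M \<Longrightarrow> dist y' y < d2 \<Longrightarrow> geodesic_dist M y y' < ereal e"
    using geodesic_dist_locally_small[OF assms p(3) e] by metis
  show "\<exists>d>0. \<forall>q\<in>M \<times> M. dist q p < d \<longrightarrow> q \<in> {p \<in> M \<times> M. geodesic_dist M (fst p) (snd p) < r}"
  proof (intro exI[of _ "min d1 d2"] conjI ballI impI)
    fix q assume q: "q \<in> M \<times> M" "dist q p < min d1 d2"
    then have "dist (fst q) x < d1" "dist (snd q) y < d2"
      using dist_fst_le[of q p] dist_snd_le[of q p] by (auto simp: p)
    then have "geodesic_dist M (fst q) x < ereal e" "geodesic_dist M y (snd q) < ereal e"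
      using q d1 d2 by auto
    then have "geodesic_dist M (fst q) (snd q) < ereal (e + a + e)"
      using a(1) by (intro geodesic_dist_triangle_less)
    also have "e + a + e = b" by (simp add: e_def)
    finally have "geodesic_dist M (fst q) (snd q) < r" using b(2) by (rule less_trans)
    then show "q \<in> {p \<in> M \<times> M. geodesic_dist M (fst p) (snd p) < r}" using q(1) by simp
  qed (use d1 d2 in simp)
qed auto

lemma borel_measurable_geodesic_dist:
  fixes M :: "'a::euclidean_space set" and \<mu> :: "'a measure"
  assumes "is_submanifold M" and sets: "sets \<mu> = sets (restrict_space borel M)"
  shows "(\<lambda>(x, y). geodesic_dist M x y) \<in> borel_measurable (\<mu> \<Otimes>\<^sub>M \<mu>)"
  unfolding borel_measurable_ereal_iff_Iio
proof
  fix r :: ereal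
  have space: "space (\<mu> \<Otimes>\<^sub>M \<mu>) = M \<times> M"
    using sets_eq_imp_space_eq[OF sets] by (simp add: space_pair_measure space_restrict_space)
  have "(\<lambda>x. x) \<in> measurable \<mu> borel"
    using measurable_restrict_space1[OF measurable_ident_sets[OF refl]]
    unfolding measurable_cong_sets[OF sets refl] .
  then have id: "(\<lambda>p. (fst p, snd p)) \<in> measurable (\<mu> \<Otimes>\<^sub>M \<mu>) (borel \<Otimes>\<^sub>M borel)"
    by (intro measurable_Pair measurable_compose[OF measurable_fst] measurable_compose[OF measurable_snd])
  obtain G where G: "open G" "{p \<in> M \<times> M. geodesic_dist M (fst p) (snd p) < r} = M \<times> M \<inter> G"
    using openin_geodesic_dist_less[OF assms(1)] unfolding openin_open by blast
  have "G \<in> sets (borel \<Otimes>\<^sub>M borel)" unfolding borel_prod using G(1) by simp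
  then have "(\<lambda>p. (fst p, snd p)) -` G \<inter> space (\<mu> \<Otimes>\<^sub>M \<mu>) \<in> sets (\<mu> \<Otimes>\<^sub>M \<mu>)"
    using measurable_sets[OF id] by blast
  moreover have "(\<lambda>p. (fst p, snd p)) -` G \<inter> space (\<mu> \<Otimes>\<^sub>M \<mu>)
      = (\<lambda>(x, y). geodesic_dist M x y) -` {..<r} \<inter> space (\<mu> \<Otimes>\<^sub>M \<mu>)"
  proof -
    have "p \<in> G \<longleftrightarrow> geodesic_dist M (fst p) (snd p) < r" if "p \<in> M \<times> M" for p
      using G(2) that by blast
    then show ?thesis unfolding space by (auto simp: case_prod_beta)
  qed
  ultimately show "(\<lambda>(x, y). geodesic_dist M x y) -` {..<r} \<inter> space (\<mu> \<Otimes>\<^sub>M \<mu>) \<in> sets (\<mu> \<Otimes>\<^sub>M \<mu>)"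
    by simp
qed

section \<open>Empirical masses of balls around sample points\<close>

definition ball_of :: "('a \<Rightarrow> 'a \<Rightarrow> ereal) \<Rightarrow> 'a set \<Rightarrow> 'a \<Rightarrow> ereal \<Rightarrow> 'a set" where
  "ball_of D S a r = {z \<in> S. D a z < r}"

definition cball_of :: "('a \<Rightarrow> 'a \<Rightarrow> ereal) \<Rightarrow> 'a set \<Rightarrow> 'a \<Rightarrow> ereal \<Rightarrow> 'a set" where
  "cball_of D S a r = {z \<in> S. D a z \<le> r}"

lemma sets_ball_of [measurable]: "D a \<in> borel_measurable \<mu> \<Longrightarrow> ball_of D (space \<mu>) a r \<in> sets \<mu>"
  unfolding ball_of_def by measurable

lemma sets_cball_of [measurable]: "D a \<in> borel_measurable \<mu> \<Longrightarrow> cball_of D (space \<mu>) a r \<in> sets \<mu>"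
  unfolding cball_of_def by measurable

lemma empirical_ball_of_le:
  fixes D :: "'a \<Rightarrow> 'a \<Rightarrow> ereal"
  assumes "finite_measure \<mu>" and Da: "D a \<in> borel_measurable \<mu>" and "0 \<le> \<alpha>" "0 \<le> c"
    and cballs: "\<And>j. j < n \<Longrightarrow> empirical n x (cball_of D (space \<mu>) a (D a (x j)))
                  \<le> \<alpha> * measure \<mu> (cball_of D (space \<mu>) a (D a (x j))) + c"
  shows "empirical n x (ball_of D (space \<mu>) a r) \<le> \<alpha> * measure \<mu> (ball_of D (space \<mu>) a r) + c"
proof (cases "{k\<in>{..<n}. x k \<in> ball_of D (space \<mu>) a r} = {}")
  case True
  show ?thesis unfolding empirical_def True using assms(3,4) by simp
next
  case False
  define K where "K = {k\<in>{..<n}. x k \<in> ball_of D (space \<mu>) a r}"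
  have "Max ((\<lambda>k. D a (x k)) ` K) \<in> (\<lambda>k. D a (x k)) ` K"
    using False by (intro Max_in) (auto simp: K_def)
  then obtain j where j: "j \<in> K" and "D a (x j) = Max ((\<lambda>k. D a (x k)) ` K)" by auto
  then have jmax: "D a (x k) \<le> D a (x j)" if "k \<in> K" for k
    using that by (auto simp: K_def intro: Max_ge)
  have "x k \<in> ball_of D (space \<mu>) a r \<longleftrightarrow> x k \<in> cball_of D (space \<mu>) a (D a (x j))" if "k < n" for k
    using that j jmax by (auto simp: K_def ball_of_def cball_of_def intro: le_less_trans)
  then have "empirical n x (ball_of D (space \<mu>) a r) = empirical n x (cball_of D (space \<mu>) a (D a (x j)))"
    unfolding empirical_def by (metis (mono_tags, lifting) lessThan_iff)
  also have "\<dots> \<le> \<alpha> * measure \<mu> (cball_of D (space \<mu>) a (D a (x j))) + c"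
    using cballs j by (simp add: K_def)
  also have "\<dots> \<le> \<alpha> * measure \<mu> (ball_of D (space \<mu>) a r) + c"
    using j Da assms(1,3)
    by (auto simp: K_def ball_of_def cball_of_def intro!: mult_left_mono finite_measure.finite_measure_mono
             intro: le_less_trans)
  finally show ?thesis .
qed

lemma measure_ball_of_le:
  fixes D :: "'a \<Rightarrow> 'a \<Rightarrow> ereal"
  assumes "prob_space \<mu>" and Da: "D a \<in> borel_measurable \<mu>" and "1 \<le> \<alpha>" "0 \<le> c" "0 < n"
    and x: "\<And>k. k < n \<Longrightarrow> x k \<in> space \<mu>"
    and balls: "\<And>j. j < n \<Longrightarrow> measure \<mu> (ball_of D (space \<mu>) a (D a (x j)))
                  \<le> \<alpha> * empirical n x (ball_of D (space \<mu>) a (D a (x j))) + c"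
  shows "measure \<mu> (ball_of D (space \<mu>) a r) \<le> \<alpha> * empirical n x (ball_of D (space \<mu>) a r) + c"
proof (cases "{k\<in>{..<n}. \<not> D a (x k) < r} = {}")
  case True
  then have "{k\<in>{..<n}. x k \<in> ball_of D (space \<mu>) a r} = {..<n}"
    using x by (auto simp: ball_of_def)
  then have "empirical n x (ball_of D (space \<mu>) a r) = 1"
    using \<open>0 < n\<close> by (simp add: empirical_def)
  then show ?thesis
    using prob_space.prob_le_1[OF assms(1), of "ball_of D (space \<mu>) a r"] assms(3,4) by simp
next
  case False
  define G where "G = {k\<in>{..<n}. \<not> D a (x k) < r}"
  define j where "j = arg_min_on (\<lambda>k. D a (x k)) G"
  have j: "j \<in> G" and jmin: "\<And>k. k \<in> G \<Longrightarrow> D a (x j) \<le> D a (x k)"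
    using arg_min_if_finite[of G "\<lambda>k. D a (x k)"] False by (auto simp: G_def j_def not_less)
  have "measure \<mu> (ball_of D (space \<mu>) a r) \<le> measure \<mu> (ball_of D (space \<mu>) a (D a (x j)))"
    using j Da prob_space.finite_measure[OF assms(1)]
    by (auto simp: G_def ball_of_def not_less intro!: finite_measure.finite_measure_mono
             intro: less_le_trans)
  also have "\<dots> \<le> \<alpha> * empirical n x (ball_of D (space \<mu>) a (D a (x j))) + c"
    using balls j by (simp add: G_def)
  also have "x k \<in> ball_of D (space \<mu>) a (D a (x j)) \<longleftrightarrow> x k \<in> ball_of D (space \<mu>) a r"
    if "k < n" for k
    using that j jmin by (force simp: G_def ball_of_def not_less intro: less_le_trans)
  then have "empirical n x (ball_of D (space \<mu>) a (D a (x j))) = empirical n x (ball_of D (space \<mu>) a r)"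
    unfolding empirical_def by (metis (mono_tags, lifting) lessThan_iff)
  finally show ?thesis .
qed

lemma borel_measurable_measure_section:
  assumes "sigma_finite_measure N" and P: "Measurable.pred (M \<Otimes>\<^sub>M N) P"
  shows "(\<lambda>x. measure N {y \<in> space N. P (x, y)}) \<in> borel_measurable M"
proof -
  have "{p \<in> space (M \<Otimes>\<^sub>M N). P p} \<in> sets (M \<Otimes>\<^sub>M N)" using P by measurable
  then have "(\<lambda>x. enn2real (emeasure N (Pair x -` {p \<in> space (M \<Otimes>\<^sub>M N). P p}))) \<in> borel_measurable M"
    using sigma_finite_measure.measurable_emeasure_Pair[OF assms(1)] by measurable
  then show ?thesis
    by (rule measurable_cong[THEN iffD1, rotated]) (auto simp: measure_def space_pair_measure)
qed

lemma borel_measurable_empirical: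
  assumes "\<And>k. k < n \<Longrightarrow> Measurable.pred M (\<lambda>\<omega>. x \<omega> k \<in> W \<omega>)"
  shows "(\<lambda>\<omega>. empirical n (x \<omega>) (W \<omega>)) \<in> borel_measurable M"
proof -
  have "(\<lambda>\<omega>. card {k\<in>{..<n}. x \<omega> k \<in> W \<omega>}) \<in> measurable M (count_space UNIV)"
  proof (rule measurable_card)
    fix k show "{\<omega> \<in> space M. k \<in> {k\<in>{..<n}. x \<omega> k \<in> W \<omega>}} \<in> sets M"
      using assms[of k] by (cases "k < n") (auto simp: pred_def)
  qed
  then show ?thesis unfolding empirical_def by measurable
qed

lemma borel_measurable_sample_balls:
  assumes "sigma_finite_measure \<mu>" and D[measurable]: "case_prod D \<in> borel_measurable (\<mu> \<Otimes>\<^sub>M \<mu>)"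
    and i: "i < n" and j: "j < n"
  shows "(\<lambda>x. measure \<mu> (ball_of D (space \<mu>) (x i) (D (x i) (x j)))) \<in> borel_measurable (PiM {..<n} (\<lambda>_. \<mu>))"
    and "(\<lambda>x. measure \<mu> (cball_of D (space \<mu>) (x i) (D (x i) (x j)))) \<in> borel_measurable (PiM {..<n} (\<lambda>_. \<mu>))"
    and "(\<lambda>x. empirical n x (ball_of D (space \<mu>) (x i) (D (x i) (x j)))) \<in> borel_measurable (PiM {..<n} (\<lambda>_. \<mu>))"
    and "(\<lambda>x. empirical n x (cball_of D (space \<mu>) (x i) (D (x i) (x j)))) \<in> borel_measurable (PiM {..<n} (\<lambda>_. \<mu>))"
proof -
  have [measurable]: "(\<lambda>x. x k) \<in> measurable (PiM {..<n} (\<lambda>_. \<mu>)) \<mu>" if "k < n" for k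
    using that by (auto intro!: measurable_component_singleton)
  have "Measurable.pred ((\<mu> \<Otimes>\<^sub>M \<mu>) \<Otimes>\<^sub>M \<mu>) (\<lambda>(p, z). D (fst p) z < D (fst p) (snd p))"
    "Measurable.pred ((\<mu> \<Otimes>\<^sub>M \<mu>) \<Otimes>\<^sub>M \<mu>) (\<lambda>(p, z). D (fst p) z \<le> D (fst p) (snd p))"
    by measurable
  from this[THEN borel_measurable_measure_section[OF assms(1)]]
  have [measurable]: "(\<lambda>(a, b). measure \<mu> (ball_of D (space \<mu>) a (D a b))) \<in> borel_measurable (\<mu> \<Otimes>\<^sub>M \<mu>)"
    "(\<lambda>(a, b). measure \<mu> (cball_of D (space \<mu>) a (D a b))) \<in> borel_measurable (\<mu> \<Otimes>\<^sub>M \<mu>)"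
    by (simp_all add: ball_of_def cball_of_def case_prod_beta')
  show "(\<lambda>x. measure \<mu> (ball_of D (space \<mu>) (x i) (D (x i) (x j)))) \<in> borel_measurable (PiM {..<n} (\<lambda>_. \<mu>))"
    "(\<lambda>x. measure \<mu> (cball_of D (space \<mu>) (x i) (D (x i) (x j)))) \<in> borel_measurable (PiM {..<n} (\<lambda>_. \<mu>))"
    using i j by measurable
  have "Measurable.pred (PiM {..<n} (\<lambda>_. \<mu>)) (\<lambda>x. x k \<in> ball_of D (space \<mu>) (x i) (D (x i) (x j)))"
    "Measurable.pred (PiM {..<n} (\<lambda>_. \<mu>)) (\<lambda>x. x k \<in> cball_of D (space \<mu>) (x i) (D (x i) (x j)))"
    if k: "k < n" for k
  proof -
    have [measurable]: "Measurable.pred (PiM {..<n} (\<lambda>_. \<mu>)) (\<lambda>x. D (x i) (x k) < D (x i) (x j))"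
      "Measurable.pred (PiM {..<n} (\<lambda>_. \<mu>)) (\<lambda>x. D (x i) (x k) \<le> D (x i) (x j))"
      unfolding pred_def using i j k by (intro borel_measurable_less borel_measurable_le; measurable)+
    show "Measurable.pred (PiM {..<n} (\<lambda>_. \<mu>)) (\<lambda>x. x k \<in> ball_of D (space \<mu>) (x i) (D (x i) (x j)))"
      "Measurable.pred (PiM {..<n} (\<lambda>_. \<mu>)) (\<lambda>x. x k \<in> cball_of D (space \<mu>) (x i) (D (x i) (x j)))"
      unfolding ball_of_def cball_of_def using k by measurable
  qed
  then show "(\<lambda>x. empirical n x (ball_of D (space \<mu>) (x i) (D (x i) (x j)))) \<in> borel_measurable (PiM {..<n} (\<lambda>_. \<mu>))"
    "(\<lambda>x. empirical n x (cball_of D (space \<mu>) (x i) (D (x i) (x j)))) \<in> borel_measurable (PiM {..<n} (\<lambda>_. \<mu>))"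
    by (simp_all add: borel_measurable_empirical)
qed

definition excess_event :: "'a measure \<Rightarrow> ('a \<Rightarrow> 'a \<Rightarrow> ereal) \<Rightarrow> nat \<Rightarrow> real \<Rightarrow> nat \<Rightarrow> nat \<Rightarrow> (nat \<Rightarrow> 'a) set"
  where "excess_event \<mu> D n c i j = {x \<in> space (PiM {..<n} (\<lambda>_. \<mu>)).
     3/2 * measure \<mu> (cball_of D (space \<mu>) (x i) (D (x i) (x j))) + c
       < empirical n x (cball_of D (space \<mu>) (x i) (D (x i) (x j)))}"

definition deficit_event :: "'a measure \<Rightarrow> ('a \<Rightarrow> 'a \<Rightarrow> ereal) \<Rightarrow> nat \<Rightarrow> real \<Rightarrow> nat \<Rightarrow> nat \<Rightarrow> (nat \<Rightarrow> 'a) set"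
  where "deficit_event \<mu> D n c i j = {x \<in> space (PiM {..<n} (\<lambda>_. \<mu>)).
     3/2 * empirical n x (ball_of D (space \<mu>) (x i) (D (x i) (x j))) + c
       < measure \<mu> (ball_of D (space \<mu>) (x i) (D (x i) (x j)))}"

lemma sets_excess_event:
  assumes "sigma_finite_measure \<mu>" and "case_prod D \<in> borel_measurable (\<mu> \<Otimes>\<^sub>M \<mu>)" and "i < n" "j < n"
  shows "excess_event \<mu> D n c i j \<in> sets (PiM {..<n} (\<lambda>_. \<mu>))"
  unfolding excess_event_def using borel_measurable_sample_balls[OF assms] by measurable

lemma sets_deficit_event:
  assumes "sigma_finite_measure \<mu>" and "case_prod D \<in> borel_measurable (\<mu> \<Otimes>\<^sub>M \<mu>)" and "i < n" "j < n"
  shows "deficit_event \<mu> D n c i j \<in> sets (PiM {..<n} (\<lambda>_. \<mu>))"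
  unfolding deficit_event_def using borel_measurable_sample_balls[OF assms] by measurable

lemma emeasure_PiM_Markov_prod:
  fixes g :: "'a \<Rightarrow> ennreal"
  assumes "sigma_finite_measure \<mu>" and "finite J" and g: "g \<in> borel_measurable \<mu>"
    and A: "A \<subseteq> {y \<in> space (PiM J (\<lambda>_. \<mu>)). 1 \<le> c * (\<Prod>k\<in>J. g (y k))}"
  shows "emeasure (PiM J (\<lambda>_. \<mu>)) A \<le> c * (\<integral>\<^sup>+ z. g z \<partial>\<mu>) ^ card J"
proof -
  interpret product_sigma_finite "\<lambda>_. \<mu>"
    using assms(1) by (simp add: product_sigma_finite_def)
  have [measurable]: "(\<lambda>y. \<Prod>k\<in>J. g (y k)) \<in> borel_measurable (PiM J (\<lambda>_. \<mu>))"
    by (intro borel_measurable_prod_ennreal measurable_compose[OF _ g] measurable_component_singleton)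
  have "emeasure (PiM J (\<lambda>_. \<mu>)) A
      \<le> emeasure (PiM J (\<lambda>_. \<mu>)) {y \<in> space (PiM J (\<lambda>_. \<mu>)). 1 \<le> c * (\<Prod>k\<in>J. g (y k))}"
    using A by (intro emeasure_mono) measurable
  also have "\<dots> \<le> c * (\<integral>\<^sup>+ y. (\<Prod>k\<in>J. g (y k)) * indicator (space (PiM J (\<lambda>_. \<mu>))) y \<partial>PiM J (\<lambda>_. \<mu>))"
    by (intro nn_integral_Markov_inequality) auto
  also have "(\<integral>\<^sup>+ y. (\<Prod>k\<in>J. g (y k)) * indicator (space (PiM J (\<lambda>_. \<mu>))) y \<partial>PiM J (\<lambda>_. \<mu>))
      = (\<integral>\<^sup>+ y. (\<Prod>k\<in>J. g (y k)) \<partial>PiM J (\<lambda>_. \<mu>))"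
    by (intro nn_integral_cong) simp
  also have "\<dots> = (\<integral>\<^sup>+ z. g z \<partial>\<mu>) ^ card J"
    using product_nn_integral_prod[OF assms(2), of "\<lambda>_. g"] g by simp
  finally show ?thesis .
qed

lemma nn_integral_two_valued:
  assumes "prob_space \<mu>" and "C \<in> sets \<mu>" and "0 \<le> a" and "0 \<le> b"
  shows "(\<integral>\<^sup>+ z. ennreal (if z \<in> C then a else b) \<partial>\<mu>) = ennreal (a * measure \<mu> C + b * (1 - measure \<mu> C))"
proof -
  interpret prob_space \<mu> by fact
  have "(\<integral>\<^sup>+ z. ennreal (if z \<in> C then a else b) \<partial>\<mu>)
      = (\<integral>\<^sup>+ z. ennreal a * indicator C z + ennreal b * indicator (space \<mu> - C) z \<partial>\<mu>)"
    by (rule nn_integral_cong) (auto simp: indicator_def)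
  also have "\<dots> = ennreal a * emeasure \<mu> C + ennreal b * emeasure \<mu> (space \<mu> - C)"
    using assms(2) by (subst nn_integral_add) (auto simp: nn_integral_cmult_indicator)
  also have "\<dots> = ennreal (a * measure \<mu> C + b * (1 - measure \<mu> C))"
    using assms by (simp add: emeasure_eq_measure prob_compl ennreal_mult'[symmetric] ennreal_plus[symmetric]
                         del: ennreal_plus)
  finally show ?thesis .
qed

lemma emeasure_PiM_count_le:
  assumes "prob_space \<mu>" and C: "C \<in> sets \<mu>" and "finite J" and "0 \<le> a" and "0 \<le> c"
    and A: "A \<subseteq> {y \<in> space (PiM J (\<lambda>_. \<mu>)). 1 \<le> c * a ^ card {k\<in>J. y k \<in> C}}"
  shows "emeasure (PiM J (\<lambda>_. \<mu>)) A \<le> ennreal (c * (a * measure \<mu> C + (1 - measure \<mu> C)) ^ card J)"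
proof -
  define g where "g z = ennreal (if z \<in> C then a else 1)" for z
  have "(\<Prod>k\<in>J. g (y k)) = ennreal (a ^ card {k\<in>J. y k \<in> C})" for y
    using \<open>0 \<le> a\<close> \<open>finite J\<close> by (simp add: g_def prod_ennreal prod.If_cases Int_def)
  then have "A \<subseteq> {y \<in> space (PiM J (\<lambda>_. \<mu>)). 1 \<le> ennreal c * (\<Prod>k\<in>J. g (y k))}"
    using A assms(4,5) by (auto simp: ennreal_mult'[symmetric] simp flip: ennreal_1)
  then have "emeasure (PiM J (\<lambda>_. \<mu>)) A \<le> ennreal c * (\<integral>\<^sup>+ z. g z \<partial>\<mu>) ^ card J"
    using assms(1,3) C by (intro emeasure_PiM_Markov_prod prob_space_imp_sigma_finite) (auto simp: g_def)
  also have "\<dots> = ennreal c * ennreal (a * measure \<mu> C + (1 - measure \<mu> C)) ^ card J"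
    unfolding g_def nn_integral_two_valued[OF assms(1,2,4) zero_le_one] by simp
  also have "\<dots> = ennreal (c * (a * measure \<mu> C + (1 - measure \<mu> C)) ^ card J)"
    using assms(4,5) prob_space.prob_le_1[OF assms(1), of C]
    by (simp add: ennreal_power ennreal_mult'[symmetric] del: ennreal_plus)
  finally show ?thesis .
qed

lemma emeasure_PiM_le_sections:
  assumes M: "\<And>i. prob_space (M i)" and IJ: "I \<inter> J = {}" "finite I" "finite J"
    and B: "B \<in> sets (PiM (I \<union> J) M)"
    and sections: "\<And>x. x \<in> space (PiM I M) \<Longrightarrow>
       emeasure (PiM J M) {y \<in> space (PiM J M). merge I J (x, y) \<in> B} \<le> q"
  shows "emeasure (PiM (I \<union> J) M) B \<le> q"
proof -
  interpret product_sigma_finite M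
    using M by (simp add: product_sigma_finite_def prob_space_imp_sigma_finite)
  interpret I: prob_space "PiM I M" using M by (rule prob_space_PiM)
  have "emeasure (PiM (I \<union> J) M) B = (\<integral>\<^sup>+ z. indicator B z \<partial>PiM (I \<union> J) M)"
    using B by simp
  also have "\<dots> = (\<integral>\<^sup>+ x. (\<integral>\<^sup>+ y. indicator B (merge I J (x, y)) \<partial>PiM J M) \<partial>PiM I M)"
    using B IJ by (intro product_nn_integral_fold) simp_all
  also have "\<dots> \<le> (\<integral>\<^sup>+ x. q \<partial>PiM I M)"
  proof (intro nn_integral_mono)
    fix x assume x: "x \<in> space (PiM I M)"
    have "(\<lambda>y. merge I J (x, y)) \<in> measurable (PiM J M) (PiM (I \<union> J) M)"
      using measurable_compose[OF measurable_Pair1'[OF x] measurable_merge] .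
    then have "{y \<in> space (PiM J M). merge I J (x, y) \<in> B} \<in> sets (PiM J M)"
      using B by measurable
    then have "emeasure (PiM J M) {y \<in> space (PiM J M). merge I J (x, y) \<in> B}
        = (\<integral>\<^sup>+ y. indicator {y \<in> space (PiM J M). merge I J (x, y) \<in> B} y \<partial>PiM J M)"
      by (rule nn_integral_indicator[symmetric])
    also have "\<dots> = (\<integral>\<^sup>+ y. indicator B (merge I J (x, y)) \<partial>PiM J M)"
      by (intro nn_integral_cong) (simp add: indicator_def)
    finally show "(\<integral>\<^sup>+ y. indicator B (merge I J (x, y)) \<partial>PiM J M) \<le> q"
      using sections[OF x] by simp
  qed
  also have "\<dots> = q" by (simp add: I.emeasure_space_1)
  finally show ?thesis .
qed

text \<open>Chernoff bound for the number of sample points other than \<open>x i\<close>, \<open>x j\<close> that fall into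
  \<open>C (x i) (x j)\<close>, obtained by conditioning on \<open>x i\<close> and \<open>x j\<close>.\<close>
lemma emeasure_PiM_pair_count_le:
  fixes C :: "'a \<Rightarrow> 'a \<Rightarrow> 'a set" and w :: "'a \<Rightarrow> 'a \<Rightarrow> real" and n i j :: nat
  assumes \<mu>: "prob_space \<mu>" and i: "i < n" and j: "j < n" and B: "B \<in> sets (PiM {..<n} (\<lambda>_. \<mu>))"
    and a: "0 \<le> a" and w: "\<And>u v. 0 \<le> w u v"
    and C: "\<And>u v. u \<in> space \<mu> \<Longrightarrow> C u v \<in> sets \<mu>"
    and count: "\<And>x. x \<in> B \<Longrightarrow> 1 \<le> w (x i) (x j) * a ^ card {k\<in>{..<n} - {i, j}. x k \<in> C (x i) (x j)}"
    and bound: "\<And>u v. u \<in> space \<mu> \<Longrightarrow>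
       w u v * (a * measure \<mu> (C u v) + (1 - measure \<mu> (C u v))) ^ card ({..<n} - {i, j}) \<le> q"
  shows "emeasure (PiM {..<n} (\<lambda>_. \<mu>)) B \<le> ennreal q"
proof -
  define J where "J = {..<n} - {i, j}"
  have n_eq: "{i, j} \<union> J = {..<n}" using i j by (auto simp: J_def)
  have finite_J: "finite J" by (simp add: J_def)
  have "emeasure (PiM ({i, j} \<union> J) (\<lambda>_. \<mu>)) B \<le> ennreal q"
  proof (rule emeasure_PiM_le_sections)
    show "B \<in> sets (PiM ({i, j} \<union> J) (\<lambda>_. \<mu>))" unfolding n_eq by (rule B)
    fix x assume "x \<in> space (PiM {i, j} (\<lambda>_. \<mu>))"
    then have xi: "x i \<in> space \<mu>" by (auto simp: space_PiM)
    have "{y \<in> space (PiM J (\<lambda>_. \<mu>)). merge {i, j} J (x, y) \<in> B}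
        \<subseteq> {y \<in> space (PiM J (\<lambda>_. \<mu>)). 1 \<le> w (x i) (x j) * a ^ card {k\<in>J. y k \<in> C (x i) (x j)}}"
      using count[of "merge {i, j} J (x, y)" for y] by (auto simp: merge_def J_def cong: conj_cong)
    then have "emeasure (PiM J (\<lambda>_. \<mu>)) {y \<in> space (PiM J (\<lambda>_. \<mu>)). merge {i, j} J (x, y) \<in> B}
        \<le> ennreal (w (x i) (x j) * (a * measure \<mu> (C (x i) (x j)) + (1 - measure \<mu> (C (x i) (x j)))) ^ card J)"
      by (rule emeasure_PiM_count_le[OF \<mu> C[OF xi] finite_J a w])
    also have "\<dots> \<le> ennreal q" using bound[OF xi, of "x j"] by (intro ennreal_leI) (simp add: J_def)
    finally show "emeasure (PiM J (\<lambda>_. \<mu>)) {y \<in> space (PiM J (\<lambda>_. \<mu>)). merge {i, j} J (x, y) \<in> B}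
        \<le> ennreal q" .
  qed (auto simp: \<mu> J_def)
  then show ?thesis unfolding n_eq .
qed

lemma ln_2_bounds: "2/3 \<le> ln (2::real)" "ln (2::real) \<le> 3/4"
proof -
  have "exp (2/3::real) ^ 3 = exp 1 ^ 2" by (simp flip: exp_of_nat_mult)
  also have "\<dots> < (272/100) ^ 2" using e_less_272 by (intro power_strict_mono) auto
  also have "\<dots> < (2::real) ^ 3" by (simp add: power2_eq_square)
  finally have "exp (2/3::real) < 2" by (rule power_less_imp_less_base) simp
  then show "2/3 \<le> ln (2::real)" by (subst ln_ge_iff) auto
  have "2 \<le> exp (3/4::real)" using exp_lower_Taylor_quadratic[of "3/4::real"] by (simp add: power2_eq_square)
  then have "ln 2 \<le> ln (exp (3/4::real))" by (intro ln_mono) simp_all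
  then show "ln (2::real) \<le> 3/4" by simp
qed

lemma excess_exponent_bound:
  fixes n p L :: real and k :: nat
  assumes "0 \<le> n" "0 \<le> p" "real k \<le> n" "1 \<le> L"
  shows "2 powr (- (3/2 * n * p + 12 * L - 2)) * (1 + p) ^ k \<le> exp (- L)"
proof -
  have "(1 + p) ^ k \<le> exp p ^ k"
    using assms(2) by (intro power_mono) (auto simp: exp_ge_add_one_self add.commute)
  also have "\<dots> = exp (k * p)" by (simp flip: exp_of_nat_mult)
  also have "\<dots> \<le> exp (n * p)" using assms by (simp add: mult_right_mono)
  finally have growth: "(1 + p) ^ k \<le> exp (n * p)" .
  have "2/3 * (3/2 * n * p + 12 * L) \<le> ln 2 * (3/2 * n * p + 12 * L)"
    using ln_2_bounds(1) assms by (intro mult_right_mono) auto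
  then have "ln 2 * (- (3/2 * n * p + 12 * L - 2)) \<le> 3/2 - n * p - 8 * L"
    using ln_2_bounds(2) by (simp add: algebra_simps)
  then have decay: "2 powr (- (3/2 * n * p + 12 * L - 2)) \<le> exp (3/2 - n * p - 8 * L)"
    by (simp add: powr_def mult.commute)
  have "2 powr (- (3/2 * n * p + 12 * L - 2)) * (1 + p) ^ k \<le> exp (3/2 - n * p - 8 * L) * exp (n * p)"
    using decay growth assms(2) by (intro mult_mono) auto
  also have "\<dots> = exp (3/2 - 8 * L)" by (simp flip: exp_add)
  also have "\<dots> \<le> exp (- L)" using assms(4) by simp
  finally show ?thesis .
qed

lemma deficit_exponent_bound:
  fixes n p L :: real and k :: nat
  assumes "0 \<le> n" "0 \<le> p" "p \<le> 1" "n - 2 \<le> real k" "1 \<le> L"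
  shows "2 powr (2/3 * n * p - 8 * L) * (1 - p / 2) ^ k \<le> exp (- L)"
proof -
  have "(1 - p / 2) ^ k \<le> exp (- p / 2) ^ k"
    using assms(3) exp_ge_add_one_self[of "- p / 2"] by (intro power_mono) auto
  also have "\<dots> = exp (k * (- p / 2))" by (simp flip: exp_of_nat_mult)
  also have "\<dots> \<le> exp (- (n - 2) * p / 2)"
    using mult_right_mono[OF assms(4) assms(2)] by (simp add: algebra_simps)
  finally have growth: "(1 - p / 2) ^ k \<le> exp (- (n - 2) * p / 2)" .
  have "ln 2 * (2/3 * n * p) \<le> 3/4 * (2/3 * n * p)" "2/3 * (8 * L) \<le> ln 2 * (8 * L)"
    using ln_2_bounds assms by (intro mult_right_mono; simp)+
  then have decay: "2 powr (2/3 * n * p - 8 * L) \<le> exp (n * p / 2 - 16/3 * L)"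
    by (simp add: powr_def algebra_simps)
  have "2 powr (2/3 * n * p - 8 * L) * (1 - p / 2) ^ k \<le> exp (n * p / 2 - 16/3 * L) * exp (- (n - 2) * p / 2)"
    using decay growth assms(3) by (intro mult_mono) auto
  also have "\<dots> = exp (p - 16/3 * L)" by (simp flip: exp_add add: field_simps)
  also have "\<dots> \<le> exp (- L)" using assms(3,5) by simp
  finally show ?thesis .
qed

lemma one_le_powr_mult_power:
  fixes b t :: real
  assumes "1 \<le> b" and "t \<le> real m"
  shows "1 \<le> b powr (- t) * b ^ m"
proof -
  have "1 \<le> b powr (m - t)" using assms by (intro ge_one_powr_ge_zero) auto
  also have "\<dots> = b powr (- t) * b ^ m"
    using assms(1) by (simp add: powr_diff powr_minus powr_realpow field_simps)
  finally show ?thesis .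
qed

lemma one_le_powr_mult_inverse_power:
  fixes b t :: real
  assumes "1 \<le> b" and "real m \<le> t"
  shows "1 \<le> b powr t * (1 / b) ^ m"
proof -
  have "1 \<le> b powr (t - m)" using assms by (intro ge_one_powr_ge_zero) auto
  also have "\<dots> = b powr t * (1 / b) ^ m" using assms(1) by (simp add: powr_diff powr_realpow power_one_over)
  finally show ?thesis .
qed

lemma emeasure_excess_event_le:
  assumes \<mu>: "prob_space \<mu>" and D: "case_prod D \<in> borel_measurable (\<mu> \<Otimes>\<^sub>M \<mu>)"
    and i: "i < n" and j: "j < n" and L: "1 \<le> L"
  shows "emeasure (PiM {..<n} (\<lambda>_. \<mu>)) (excess_event \<mu> D n (12 * L / n) i j) \<le> ennreal (exp (- L))"
proof -
  define C where "C u v = cball_of D (space \<mu>) u (D u v)" for u v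
  define t where "t u v = 3/2 * n * measure \<mu> (C u v) + 12 * L - 2" for u v
  show ?thesis
  proof (rule emeasure_PiM_pair_count_le[where a = 2 and C = C and w = "\<lambda>u v. 2 powr (- t u v)"])
    show "excess_event \<mu> D n (12 * L / n) i j \<in> sets (PiM {..<n} (\<lambda>_. \<mu>))"
      using prob_space_imp_sigma_finite[OF \<mu>] D i j by (rule sets_excess_event)
    show "C u v \<in> sets \<mu>" if "u \<in> space \<mu>" for u v
      using measurable_Pair2[OF D that] by (simp add: C_def)
    fix x assume "x \<in> excess_event \<mu> D n (12 * L / n) i j"
    then have "3/2 * measure \<mu> (C (x i) (x j)) + 12 * L / n < empirical n x (C (x i) (x j))"
      by (simp add: excess_event_def C_def)
    then have "real n * (3/2 * measure \<mu> (C (x i) (x j)) + 12 * L / n)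
        < real n * empirical n x (C (x i) (x j))"
      using i by (intro mult_strict_left_mono) auto
    moreover have "real n * (3/2 * measure \<mu> (C (x i) (x j)) + 12 * L / n)
        = 3/2 * n * measure \<mu> (C (x i) (x j)) + 12 * L"
      "real n * empirical n x (C (x i) (x j)) = card {k\<in>{..<n}. x k \<in> C (x i) (x j)}"
      using i by (simp_all add: empirical_def field_simps)
    moreover have "card {k\<in>{..<n}. x k \<in> C (x i) (x j)}
        \<le> card {i, j} + card {k\<in>{..<n} - {i, j}. x k \<in> C (x i) (x j)}"
      by (intro order_trans[OF card_mono card_Un_le]) auto
    moreover have "card {i, j} \<le> 2" by (simp add: card_insert_if)
    ultimately have "t (x i) (x j) \<le> card {k\<in>{..<n} - {i, j}. x k \<in> C (x i) (x j)}"
      unfolding t_def by linarith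
    then show "1 \<le> 2 powr (- t (x i) (x j)) * 2 ^ card {k\<in>{..<n} - {i, j}. x k \<in> C (x i) (x j)}"
      by (intro one_le_powr_mult_power) simp_all
  next
    fix u v
    have affine: "2 * p + (1 - p) = 1 + p" for p :: real by simp
    have "card ({..<n} - {i, j}) \<le> n" using card_mono[of "{..<n}" "{..<n} - {i, j}"] by auto
    then show "2 powr (- t u v) * (2 * measure \<mu> (C u v) + (1 - measure \<mu> (C u v))) ^ card ({..<n} - {i, j})
        \<le> exp (- L)"
      unfolding t_def affine using L by (intro excess_exponent_bound) simp_all
  qed (use \<mu> i j in simp_all)
qed

lemma emeasure_deficit_event_le:
  assumes \<mu>: "prob_space \<mu>" and D: "case_prod D \<in> borel_measurable (\<mu> \<Otimes>\<^sub>M \<mu>)"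
    and i: "i < n" and j: "j < n" and L: "1 \<le> L"
  shows "emeasure (PiM {..<n} (\<lambda>_. \<mu>)) (deficit_event \<mu> D n (12 * L / n) i j) \<le> ennreal (exp (- L))"
proof -
  define C where "C u v = ball_of D (space \<mu>) u (D u v)" for u v
  define t where "t u v = 2/3 * n * measure \<mu> (C u v) - 8 * L" for u v
  show ?thesis
  proof (rule emeasure_PiM_pair_count_le[where a = "1/2" and C = C and w = "\<lambda>u v. 2 powr t u v"])
    show "deficit_event \<mu> D n (12 * L / n) i j \<in> sets (PiM {..<n} (\<lambda>_. \<mu>))"
      using prob_space_imp_sigma_finite[OF \<mu>] D i j by (rule sets_deficit_event)
    show "C u v \<in> sets \<mu>" if "u \<in> space \<mu>" for u v
      using measurable_Pair2[OF D that] by (simp add: C_def)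
    fix x assume "x \<in> deficit_event \<mu> D n (12 * L / n) i j"
    then have "3/2 * empirical n x (C (x i) (x j)) + 12 * L / n < measure \<mu> (C (x i) (x j))"
      by (simp add: deficit_event_def C_def)
    then have "real n * (3/2 * empirical n x (C (x i) (x j)) + 12 * L / n)
        < real n * measure \<mu> (C (x i) (x j))"
      using i by (intro mult_strict_left_mono) auto
    moreover have "real n * (3/2 * empirical n x (C (x i) (x j)) + 12 * L / n)
        = 3/2 * card {k\<in>{..<n}. x k \<in> C (x i) (x j)} + 12 * L"
      using i by (simp add: empirical_def field_simps)
    moreover have "card {k\<in>{..<n} - {i, j}. x k \<in> C (x i) (x j)} \<le> card {k\<in>{..<n}. x k \<in> C (x i) (x j)}"
      by (intro card_mono) auto
    ultimately have "card {k\<in>{..<n} - {i, j}. x k \<in> C (x i) (x j)} \<le> t (x i) (x j)"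
      unfolding t_def by linarith
    then show "1 \<le> 2 powr t (x i) (x j) * (1/2) ^ card {k\<in>{..<n} - {i, j}. x k \<in> C (x i) (x j)}"
      by (intro one_le_powr_mult_inverse_power) simp_all
  next
    fix u v
    have affine: "1/2 * p + (1 - p) = 1 - p / 2" for p :: real by simp
    have "n - card {i, j} \<le> card ({..<n} - {i, j})" using diff_card_le_card_Diff[of "{i, j}" "{..<n}"] by simp
    moreover have "card {i, j} \<le> 2" by (simp add: card_insert_if)
    ultimately have "real n - 2 \<le> card ({..<n} - {i, j})" by linarith
    then show "2 powr t u v * (1/2 * measure \<mu> (C u v) + (1 - measure \<mu> (C u v))) ^ card ({..<n} - {i, j})
        \<le> exp (- L)"
      unfolding t_def affine using L prob_space.prob_le_1[OF \<mu>] by (intro deficit_exponent_bound) simp_all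
  qed (use \<mu> i j in simp_all)
qed

definition bad_samples :: "'a measure \<Rightarrow> ('a \<Rightarrow> 'a \<Rightarrow> ereal) \<Rightarrow> nat \<Rightarrow> real \<Rightarrow> (nat \<Rightarrow> 'a) set"
  where "bad_samples \<mu> D n c = (\<Union>i<n. \<Union>j<n. excess_event \<mu> D n c i j \<union> deficit_event \<mu> D n c i j)"

lemma bad_samples_bounds:
  assumes \<mu>: "prob_space \<mu>" and D: "case_prod D \<in> borel_measurable (\<mu> \<Otimes>\<^sub>M \<mu>)" and L: "1 \<le> L"
  shows "bad_samples \<mu> D n (12 * L / n) \<in> sets (PiM {..<n} (\<lambda>_. \<mu>))"
    and "measure (PiM {..<n} (\<lambda>_. \<mu>)) (bad_samples \<mu> D n (12 * L / n)) \<le> 2 * real n ^ 2 * exp (- L)"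
proof -
  let ?\<Omega> = "PiM {..<n} (\<lambda>_. \<mu>)"
  define E where
    "E i j = excess_event \<mu> D n (12 * L / n) i j \<union> deficit_event \<mu> D n (12 * L / n) i j" for i j
  interpret \<Omega>: prob_space ?\<Omega> using \<mu> by (intro prob_space_PiM)
  have excess: "excess_event \<mu> D n (12 * L / n) i j \<in> sets ?\<Omega>"
    and deficit: "deficit_event \<mu> D n (12 * L / n) i j \<in> sets ?\<Omega>" if "i < n" "j < n" for i j
    using prob_space_imp_sigma_finite[OF \<mu>] D that by (rule sets_excess_event sets_deficit_event)+
  then have E: "E i j \<in> sets ?\<Omega>" if "i < n" "j < n" for i j using that by (simp add: E_def)
  then show "bad_samples \<mu> D n (12 * L / n) \<in> sets ?\<Omega>"
    unfolding bad_samples_def E_def[symmetric] by (intro sets.finite_UN) auto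
  have E_le: "measure ?\<Omega> (E i j) \<le> 2 * exp (- L)" if "i < n" "j < n" for i j
  proof -
    have "measure ?\<Omega> (E i j)
        \<le> measure ?\<Omega> (excess_event \<mu> D n (12 * L / n) i j)
          + measure ?\<Omega> (deficit_event \<mu> D n (12 * L / n) i j)"
      unfolding E_def using excess[OF that] deficit[OF that] by (rule measure_Un_le)
    also have "\<dots> \<le> exp (- L) + exp (- L)"
      using emeasure_excess_event_le[OF \<mu> D that L] emeasure_deficit_event_le[OF \<mu> D that L]
      by (intro add_mono) (simp_all add: \<Omega>.emeasure_eq_measure)
    finally show ?thesis by simp
  qed
  have row: "(\<Union>j<n. E i j) \<in> sets ?\<Omega>" "measure ?\<Omega> (\<Union>j<n. E i j) \<le> n * (2 * exp (- L))"
    if "i < n" for i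
  proof -
    show "(\<Union>j<n. E i j) \<in> sets ?\<Omega>" using E that by (intro sets.finite_UN) auto
    have "measure ?\<Omega> (\<Union>j<n. E i j) \<le> (\<Sum>j<n. measure ?\<Omega> (E i j))"
      using E that by (intro measure_UNION_le) auto
    also have "\<dots> \<le> (\<Sum>j<n. 2 * exp (- L))" using E_le that by (intro sum_mono) auto
    finally show "measure ?\<Omega> (\<Union>j<n. E i j) \<le> n * (2 * exp (- L))" by simp
  qed
  have "measure ?\<Omega> (\<Union>i<n. \<Union>j<n. E i j) \<le> (\<Sum>i<n. measure ?\<Omega> (\<Union>j<n. E i j))"
    using row(1) by (intro measure_UNION_le) auto
  also have "\<dots> \<le> (\<Sum>i<n. n * (2 * exp (- L)))" using row(2) by (intro sum_mono) auto
  finally show "measure ?\<Omega> (bad_samples \<mu> D n (12 * L / n)) \<le> 2 * real n ^ 2 * exp (- L)"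
    unfolding bad_samples_def E_def[symmetric] by (simp add: power2_eq_square mult_ac)
qed

lemma ball_bounds_outside_bad_samples:
  assumes \<mu>: "prob_space \<mu>" and D: "case_prod D \<in> borel_measurable (\<mu> \<Otimes>\<^sub>M \<mu>)"
    and n: "0 < n" and c: "0 \<le> c" and x: "x \<in> space (PiM {..<n} (\<lambda>_. \<mu>)) - bad_samples \<mu> D n c"
    and i: "i < n"
  shows "empirical n x (ball_of D (space \<mu>) (x i) r) \<le> 3/2 * measure \<mu> (ball_of D (space \<mu>) (x i) r) + c"
    and "measure \<mu> (ball_of D (space \<mu>) (x i) r) \<le> 3/2 * empirical n x (ball_of D (space \<mu>) (x i) r) + c"
proof -
  have xk: "x k \<in> space \<mu>" if "k < n" for k using x that by (auto simp: space_PiM)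
  have Dx: "D (x i) \<in> borel_measurable \<mu>" using measurable_Pair2[OF D xk[OF i]] by simp
  have "x \<notin> excess_event \<mu> D n c i j" "x \<notin> deficit_event \<mu> D n c i j" if "j < n" for j
    using x i that by (auto simp: bad_samples_def)
  then have excess_free: "empirical n x (cball_of D (space \<mu>) (x i) (D (x i) (x j)))
        \<le> 3/2 * measure \<mu> (cball_of D (space \<mu>) (x i) (D (x i) (x j))) + c"
    and deficit_free: "measure \<mu> (ball_of D (space \<mu>) (x i) (D (x i) (x j)))
        \<le> 3/2 * empirical n x (ball_of D (space \<mu>) (x i) (D (x i) (x j))) + c"
    if "j < n" for j
    using x that by (simp_all add: excess_event_def deficit_event_def not_less)
  show "empirical n x (ball_of D (space \<mu>) (x i) r) \<le> 3/2 * measure \<mu> (ball_of D (space \<mu>) (x i) r) + c"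
    by (rule empirical_ball_of_le[OF prob_space.finite_measure[OF \<mu>] Dx _ c excess_free]) simp_all
  show "measure \<mu> (ball_of D (space \<mu>) (x i) r) \<le> 3/2 * empirical n x (ball_of D (space \<mu>) (x i) r) + c"
    by (rule measure_ball_of_le[OF \<mu> Dx _ c n xk deficit_free]) simp_all
qed

lemma distr_iid_sample_PiM:
  assumes "prob_space P" and "0 < n"
    and "\<And>j. j < n \<Longrightarrow> X j \<in> measurable P \<mu>" and "\<And>j. j < n \<Longrightarrow> distr P \<mu> (X j) = \<mu>"
    and "prob_space.indep_vars P (\<lambda>_. \<mu>) X {..<n}"
  shows "distr P (PiM {..<n} (\<lambda>_. \<mu>)) (\<lambda>\<omega>. \<lambda>k\<in>{..<n}. X k \<omega>) = PiM {..<n} (\<lambda>_. \<mu>)"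
proof -
  have "{..<n} \<noteq> {}" using assms(2) by auto
  then have "distr P (PiM {..<n} (\<lambda>_. \<mu>)) (\<lambda>\<omega>. \<lambda>k\<in>{..<n}. X k \<omega>) = (\<Pi>\<^sub>M k\<in>{..<n}. distr P \<mu> (X k))"
    using prob_space.indep_vars_iff_distr_eq_PiM'[OF assms(1), where I="{..<n}" and M'="\<lambda>_. \<mu>" and X=X] assms
    by auto
  also have "\<dots> = PiM {..<n} (\<lambda>_. \<mu>)" by (rule PiM_cong) (simp_all add: assms(4))
  finally show ?thesis .
qed

lemma iid_sample_ball_bounds:
  fixes D :: "'a \<Rightarrow> 'a \<Rightarrow> ereal"
  assumes \<mu>: "prob_space \<mu>" and D: "case_prod D \<in> borel_measurable (\<mu> \<Otimes>\<^sub>M \<mu>)" and "prob_space P"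
    and n: "0 < n" and L: "1 \<le> L"
    and X: "\<And>j. j < n \<Longrightarrow> X j \<in> measurable P \<mu>" and "\<And>j. j < n \<Longrightarrow> distr P \<mu> (X j) = \<mu>"
    and "prob_space.indep_vars P (\<lambda>_. \<mu>) X {..<n}"
  shows "\<exists>A \<in> sets P. 1 - 2 * real n ^ 2 * exp (- L) \<le> measure P A \<and>
    (\<forall>\<omega>\<in>A. \<forall>i<n. \<forall>r.
       empirical n (\<lambda>j. X j \<omega>) (ball_of D (space \<mu>) (X i \<omega>) r)
         \<le> 3/2 * measure \<mu> (ball_of D (space \<mu>) (X i \<omega>) r) + 12 * L / n \<and>
       measure \<mu> (ball_of D (space \<mu>) (X i \<omega>) r)
         \<le> 3/2 * empirical n (\<lambda>j. X j \<omega>) (ball_of D (space \<mu>) (X i \<omega>) r) + 12 * L / n)"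
proof -
  interpret P: prob_space P by fact
  define F where "F = (\<lambda>\<omega>. \<lambda>k\<in>{..<n}. X k \<omega>)"
  define Bad where "Bad = bad_samples \<mu> D n (12 * L / n)"
  have F: "F \<in> measurable P (PiM {..<n} (\<lambda>_. \<mu>))" unfolding F_def using X by (intro measurable_restrict) auto
  have Bad: "Bad \<in> sets (PiM {..<n} (\<lambda>_. \<mu>))" "measure (PiM {..<n} (\<lambda>_. \<mu>)) Bad \<le> 2 * real n ^ 2 * exp (- L)"
    unfolding Bad_def using bad_samples_bounds[OF \<mu> D L] by simp_all
  have "measure P (F -` Bad \<inter> space P) = measure (PiM {..<n} (\<lambda>_. \<mu>)) Bad"
    using measure_distr[OF F Bad(1)] distr_iid_sample_PiM[OF assms(3,4,6-8)] by (simp add: F_def)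
  moreover have compl_eq: "space P - (F -` Bad \<inter> space P) = space P - F -` Bad" by blast
  ultimately have "1 - 2 * real n ^ 2 * exp (- L) \<le> measure P (space P - F -` Bad)"
    using P.prob_compl[OF measurable_sets[OF F Bad(1)]] Bad(2) by simp
  moreover have "space P - F -` Bad \<in> sets P"
    using sets.Diff[OF sets.top measurable_sets[OF F Bad(1)]] unfolding compl_eq .
  moreover have "empirical n (\<lambda>j. X j \<omega>) (ball_of D (space \<mu>) (X i \<omega>) r)
        \<le> 3/2 * measure \<mu> (ball_of D (space \<mu>) (X i \<omega>) r) + 12 * L / n \<and>
      measure \<mu> (ball_of D (space \<mu>) (X i \<omega>) r)
        \<le> 3/2 * empirical n (\<lambda>j. X j \<omega>) (ball_of D (space \<mu>) (X i \<omega>) r) + 12 * L / n"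
    if \<omega>: "\<omega> \<in> space P - F -` Bad" and i: "i < n" for \<omega> i r
  proof -
    have "F \<omega> \<in> space (PiM {..<n} (\<lambda>_. \<mu>)) - bad_samples \<mu> D n (12 * L / n)"
      using \<omega> measurable_space[OF F] by (auto simp: Bad_def)
    moreover have "empirical n (F \<omega>) W = empirical n (\<lambda>j. X j \<omega>) W" for W
      unfolding empirical_def F_def by (metis (lifting) lessThan_iff restrict_apply')
    moreover have "F \<omega> i = X i \<omega>" using i by (simp add: F_def)
    moreover have "0 \<le> 12 * L / n" using L by simp
    ultimately show ?thesis using ball_bounds_outside_bad_samples[OF \<mu> D n _ _ i, of "12 * L / n" "F \<omega>" r]
      by simp
  qed
  ultimately show ?thesis by blast
qed

theorem mainTheorem10:
  fixes M :: "'a::euclidean_space set"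
    and \<mu> :: "'a measure" and P :: "'w measure"
    and X :: "nat \<Rightarrow> 'w \<Rightarrow> 'a" and n :: nat and p2 :: real
  assumes "is_submanifold M"
    and "prob_space \<mu>" and "sets \<mu> = sets (restrict_space borel M)"
    and "prob_space P"
    and "0 < p2" and "p2 \<le> 1/2" and "0 < n"
    and "\<And>j. j < n \<Longrightarrow> X j \<in> measurable P \<mu>"
    and "\<And>j. j < n \<Longrightarrow> distr P \<mu> (X j) = \<mu>"
    and "prob_space.indep_vars P (\<lambda>_. \<mu>) X {..<n}"
  shows "let \<delta>2 = 4 / real n * ln (4 * real n ^ 2 / p2) in
    \<exists>A \<in> sets P. measure P A \<ge> 1 - p2 \<and>
      (\<forall>\<omega>\<in>A. \<forall>i<n. \<forall>r>0.
         empirical n (\<lambda>j. X j \<omega>) (geo_ball M (X i \<omega>) r)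
           \<le> 3/2 * measure \<mu> (geo_ball M (X i \<omega>) r) + 3 * \<delta>2
       \<and> measure \<mu> (geo_ball M (X i \<omega>) r)
           \<le> 3/2 * empirical n (\<lambda>j. X j \<omega>) (geo_ball M (X i \<omega>) r) + 3 * \<delta>2)"
proof -
  define L where "L = ln (4 * real n ^ 2 / p2)"
  have n2: "1 \<le> real n ^ 2" using assms(7) by simp
  then have "8 \<le> 4 * real n ^ 2 / p2" using assms(5,6) by (simp add: le_divide_eq)
  then have L: "1 \<le> L" using e_less_272 assms(5) n2 by (simp add: L_def ln_ge_iff)
  have "0 < 4 * real n ^ 2 / p2" using assms(5,7) by (intro divide_pos_pos) auto
  then have "exp (- L) = p2 / (4 * real n ^ 2)" by (simp add: L_def exp_minus)
  then have bound: "1 - p2 \<le> 1 - 2 * real n ^ 2 * exp (- L)" using assms(5,7) by simp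
  have ball_eq: "ball_of (geodesic_dist M) (space \<mu>) a (ereal r) = geo_ball M a r" for a r
    using sets_eq_imp_space_eq[OF assms(3)] by (simp add: ball_of_def geo_ball_def space_restrict_space)
  obtain A where A: "A \<in> sets P" "1 - 2 * real n ^ 2 * exp (- L) \<le> measure P A"
    and good: "\<And>\<omega> i r. \<omega> \<in> A \<Longrightarrow> i < n \<Longrightarrow>
      empirical n (\<lambda>j. X j \<omega>) (geo_ball M (X i \<omega>) r)
        \<le> 3/2 * measure \<mu> (geo_ball M (X i \<omega>) r) + 12 * L / n \<and>
      measure \<mu> (geo_ball M (X i \<omega>) r)
        \<le> 3/2 * empirical n (\<lambda>j. X j \<omega>) (geo_ball M (X i \<omega>) r) + 12 * L / n"
    using iid_sample_ball_bounds[OF assms(2) borel_measurable_geodesic_dist[OF assms(1,3)]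
        assms(4,7) L assms(8-10)]
    unfolding ball_eq[symmetric] by blast
  have \<delta>_eq: "3 * (4 / real n * L) = 12 * L / n" by simp
  show ?thesis unfolding Let_def L_def[symmetric] \<delta>_eq
  proof (intro bexI[OF _ A(1)] conjI ballI allI impI)
    show "1 - p2 \<le> measure P A" using A(2) bound by linarith
  qed (auto dest: good)
qed


end
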